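(* For a finite set $A \subset \mathbb{R}$ define the set of popular differences \[ P = \left\{ x \in A-A : \delta_A(x) \geq \frac{1}{11}\frac{|A|^2}{|A-A|} \right\}. \] Then \[ |A|^6 \ll E_3(A) \cdot \sum_{x\in P} \delta_P(x). \]
   Context: For finite $X, Y\subset\mathbb{R}$, $\delta_{X,Y}(x) = \#\{(u,v)\in X\times Y : x = u - v\}$ and $\delta_X = \delta_{X,X}$. $E_3(A) = \sum_{x} \delta_A(x)^3$. The notation $F \ll G$ means $F = O(G)$ as $|A| \to \infty$, i.e. $F \le C G$ for an absolute constant $C$ (for all sufficiently large $|A|$). *)

theory Defs
  imports Complex_Main
begin

definition diffset :: "real set \<Rightarrow> real set \<Rightarrow> real set" where
  "diffset X Y = {u - v | u v. u \<in> X \<and> v \<in> Y}"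

definition delta :: "real set \<Rightarrow> real set \<Rightarrow> real \<Rightarrow> nat" where
  "delta X Y x = card {(u, v). u \<in> X \<and> v \<in> Y \<and> x = u - v}"

text \<open>E_3(A) = sum over x of delta_A(x)^3; only x in A - A contribute.\<close>
definition E3 :: "real set \<Rightarrow> nat" where
  "E3 A = (\<Sum>x\<in>diffset A A. (delta A A x) ^ 3)"

definition popular :: "real set \<Rightarrow> real set" where
  "popular A = {x \<in> diffset A A.
     real (delta A A x) \<ge> (1/11) * (real (card A))^2 / real (card (diffset A A))}"

end

theory Submission
  imports Defs "HOL-Analysis.Convex"
begin

text \<open>Since at most \<open>|A|\<^sup>2/11\<close> pairs of \<open>A\<close> have an unpopular difference, a union bound shows
  that at least \<open>8/11 |A|\<^sup>3\<close> triples \<open>(a, b, c)\<close> have all three differences popular. Such a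
  triple is mapped to \<open>(a - c, b - c)\<close>, a pair \<open>(p, q)\<close> of popular differences with \<open>p - q\<close>
  popular; there are \<open>\<Sum>\<^sub>x\<^sub>\<in>\<^sub>P \<delta>\<^sub>P(x)\<close> such pairs. Two triples have the same image iff they
  are translates of each other, so the number of collisions of this map is at most \<open>E\<^sub>3(A)\<close>,
  and Cauchy-Schwarz gives \<open>(8/11)\<^sup>2 |A|\<^sup>6 \<le> E\<^sub>3(A) \<Sum>\<^sub>x\<^sub>\<in>\<^sub>P \<delta>\<^sub>P(x)\<close>.\<close>

lemma finite_diffset: "finite X \<Longrightarrow> finite Y \<Longrightarrow> finite (diffset X Y)"
proof -
  have "diffset X Y = (\<lambda>(u, v). u - v) ` (X \<times> Y)"
    unfolding diffset_def by auto
  then show "finite X \<Longrightarrow> finite Y \<Longrightarrow> ?thesis" by simp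
qed

lemma sum_delta_eq_card:
  assumes "finite X" "finite Y" "finite D"
  shows "(\<Sum>x\<in>D. delta X Y x) = card {(u, v). u \<in> X \<and> v \<in> Y \<and> u - v \<in> D}"
proof -
  have fibre_finite: "finite {(u, v). u \<in> X \<and> v \<in> Y \<and> x = u - v}" for x
    by (rule finite_subset[of _ "X \<times> Y"]) (use assms in auto)
  have "{(u, v). u \<in> X \<and> v \<in> Y \<and> u - v \<in> D}
      = (\<Union>x\<in>D. {(u, v). u \<in> X \<and> v \<in> Y \<and> x = u - v})"
    by auto
  also have "card \<dots> = (\<Sum>x\<in>D. card {(u, v). u \<in> X \<and> v \<in> Y \<and> x = u - v})"
    by (rule card_UN_disjoint) (use assms fibre_finite in auto)
  finally show ?thesis by (simp add: delta_def)
qed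

lemma card_unpopular_pairs_le:
  assumes "finite A"
  shows "11 * card {(a, b). a \<in> A \<and> b \<in> A \<and> a - b \<notin> popular A} \<le> card A ^ 2"
  (is "11 * card ?Bad \<le> _")
proof -
  define D where "D = diffset A A"
  define t where "t = (1/11) * real (card A) ^ 2 / real (card D)"
  have "finite D" using assms by (simp add: D_def finite_diffset)
  have "?Bad = {(a, b). a \<in> A \<and> b \<in> A \<and> a - b \<in> D - popular A}"
    by (auto simp: D_def diffset_def)
  also have "card \<dots> = (\<Sum>x\<in>D - popular A. delta A A x)"
    using sum_delta_eq_card[of A A "D - popular A"] assms \<open>finite D\<close> by simp
  finally have "real (card ?Bad) = (\<Sum>x\<in>D - popular A. real (delta A A x))"
    by simp
  also have "\<dots> \<le> (\<Sum>x\<in>D - popular A. t)"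
    by (rule sum_mono) (auto simp: popular_def D_def t_def)
  also have "\<dots> = real (card (D - popular A)) * t"
    by simp
  also have "\<dots> \<le> real (card D) * t"
    using \<open>finite D\<close> by (intro mult_right_mono) (simp_all add: t_def card_mono)
  also have "\<dots> \<le> real (card A) ^ 2 / 11"
    by (cases "card D = 0") (simp_all add: t_def)
  finally have "real (11 * card ?Bad) \<le> real (card A ^ 2)"
    by simp
  then show ?thesis
    by (simp only: of_nat_le_iff)
qed

lemma card_pairwise_related_triples_ge:
  fixes R :: "'a \<Rightarrow> 'a \<Rightarrow> bool"
  assumes "finite A"
  shows "card A ^ 3 \<le> card {(a, b, c). a \<in> A \<and> b \<in> A \<and> c \<in> A \<and> R a b \<and> R a c \<and> R b c}
                      + 3 * (card {(a, b). a \<in> A \<and> b \<in> A \<and> \<not> R a b} * card A)"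
proof -
  define T where "T = {(a, b, c). a \<in> A \<and> b \<in> A \<and> c \<in> A \<and> R a b \<and> R a c \<and> R b c}"
  define Bad where "Bad = {(a, b). a \<in> A \<and> b \<in> A \<and> \<not> R a b}"
  have "finite T" "finite Bad"
    by (rule finite_subset[of _ "A \<times> A \<times> A"], auto simp: T_def assms)
       (rule finite_subset[of _ "A \<times> A"], auto simp: Bad_def assms)
  define B\<^sub>1 where "B\<^sub>1 = (\<lambda>((a, b), c). (a, b, c)) ` (Bad \<times> A)"
  define B\<^sub>2 where "B\<^sub>2 = (\<lambda>((a, c), b). (a, b, c)) ` (Bad \<times> A)"
  define B\<^sub>3 where "B\<^sub>3 = (\<lambda>((b, c), a). (a, b, c)) ` (Bad \<times> A)"
  have "finite B\<^sub>1" "finite B\<^sub>2" "finite B\<^sub>3"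
    using \<open>finite Bad\<close> assms by (simp_all add: B\<^sub>1_def B\<^sub>2_def B\<^sub>3_def)
  have "card (f ` (Bad \<times> A)) \<le> card Bad * card A"
    for f :: "('a \<times> 'a) \<times> 'a \<Rightarrow> 'a \<times> 'a \<times> 'a"
    using card_image_le[of "Bad \<times> A" f] \<open>finite Bad\<close> assms by (simp add: card_cartesian_product)
  then have B_le: "card B\<^sub>1 \<le> card Bad * card A" "card B\<^sub>2 \<le> card Bad * card A"
    "card B\<^sub>3 \<le> card Bad * card A"
    unfolding B\<^sub>1_def B\<^sub>2_def B\<^sub>3_def by blast+
  have "card A ^ 3 = card (A \<times> A \<times> A)"
    by (simp add: card_cartesian_product power3_eq_cube)
  also have "\<dots> \<le> card (T \<union> B\<^sub>1 \<union> B\<^sub>2 \<union> B\<^sub>3)"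
  proof (rule card_mono)
    show "finite (T \<union> B\<^sub>1 \<union> B\<^sub>2 \<union> B\<^sub>3)"
      using \<open>finite T\<close> \<open>finite B\<^sub>1\<close> \<open>finite B\<^sub>2\<close> \<open>finite B\<^sub>3\<close> by simp
    show "A \<times> A \<times> A \<subseteq> T \<union> B\<^sub>1 \<union> B\<^sub>2 \<union> B\<^sub>3"
      unfolding T_def Bad_def B\<^sub>1_def B\<^sub>2_def B\<^sub>3_def by (auto simp: image_iff)
  qed
  also have "\<dots> \<le> card T + card B\<^sub>1 + card B\<^sub>2 + card B\<^sub>3"
    using card_Un_le[of "T \<union> B\<^sub>1 \<union> B\<^sub>2" B\<^sub>3] card_Un_le[of "T \<union> B\<^sub>1" B\<^sub>2]
      card_Un_le[of T B\<^sub>1]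
    by linarith
  also have "\<dots> \<le> card T + 3 * (card Bad * card A)"
    using B_le by linarith
  finally show ?thesis unfolding T_def Bad_def by simp
qed

definition collisions :: "('a \<Rightarrow> 'b) \<Rightarrow> 'a set \<Rightarrow> ('a \<times> 'a) set" where
  "collisions g T = {(x, y). x \<in> T \<and> y \<in> T \<and> g x = g y}"

lemma finite_collisions: "finite T \<Longrightarrow> finite (collisions g T)"
  unfolding collisions_def by (rule finite_subset[of _ "T \<times> T"]) auto

lemma collisions_mono: "T \<subseteq> T' \<Longrightarrow> collisions g T \<subseteq> collisions g T'"
  unfolding collisions_def by auto

lemma card_sq_le_card_mult_card_collisions:
  assumes "finite T" "finite S" "g ` T \<subseteq> S"
  shows "card T ^ 2 \<le> card S * card (collisions g T)"
proof -
  define F where "F s = {x \<in> T. g x = s}" for s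
  have "finite (F s)" for s
    using assms(1) by (simp add: F_def)
  have "T = (\<Union>s\<in>S. F s)"
    using assms(3) by (auto simp: F_def)
  also have "card \<dots> = (\<Sum>s\<in>S. card (F s))"
    by (rule card_UN_disjoint) (use assms(2) \<open>\<And>s. finite (F s)\<close> in \<open>auto simp: F_def\<close>)
  finally have card_T: "card T = (\<Sum>s\<in>S. card (F s))" .
  have "collisions g T = (\<Union>s\<in>S. F s \<times> F s)"
    using assms(3) by (auto simp: F_def collisions_def)
  also have "card \<dots> = (\<Sum>s\<in>S. card (F s \<times> F s))"
    by (rule card_UN_disjoint) (use assms(2) \<open>\<And>s. finite (F s)\<close> in \<open>auto simp: F_def\<close>)
  finally have card_collisions: "card (collisions g T) = (\<Sum>s\<in>S. card (F s) ^ 2)"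
    by (simp add: card_cartesian_product power2_eq_square)
  have "real (card T) ^ 2 = (\<Sum>s\<in>S. real (card (F s)) * 1) ^ 2"
    by (simp add: card_T)
  also have "\<dots> \<le> (\<Sum>s\<in>S. real (card (F s)) ^ 2) * (\<Sum>s\<in>S. 1 ^ 2)"
    by (rule Cauchy_Schwarz_ineq_sum)
  also have "\<dots> = real (card (collisions g T)) * real (card S)"
    by (simp add: card_collisions)
  finally show ?thesis
    by (simp add: mult.commute flip: of_nat_power of_nat_mult)
qed

lemma card_collisions_differences_le_E3:
  assumes "finite A"
  shows "card (collisions (\<lambda>(a, b, c). (a - c, b - c)) (A \<times> A \<times> A)) \<le> E3 A"
    (is "card ?C \<le> _")
proof -
  define R where "R t = {(u, v). u \<in> A \<and> v \<in> A \<and> t = u - v}" for t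
  \<comment> \<open>Colliding triples are translates of each other by \<open>t = c - c'\<close>, i.e. three
    representations of the same difference \<open>t\<close>.\<close>
  define \<phi> :: "(real \<times> real \<times> real) \<times> real \<times> real \<times> real \<Rightarrow> _"
    where "\<phi> = (\<lambda>((a, b, c), (a', b', c')). (c - c', (a, a'), (b, b'), (c, c')))"
  have "finite (diffset A A)"
    using assms by (simp add: finite_diffset)
  have "finite (R t)" for t
    by (rule finite_subset[of _ "A \<times> A"]) (auto simp: R_def assms)
  have "inj_on \<phi> ?C"
    unfolding inj_on_def \<phi>_def by auto
  moreover have "\<phi> ` ?C \<subseteq> Sigma (diffset A A) (\<lambda>t. R t \<times> R t \<times> R t)"
  proof
    fix z assume "z \<in> \<phi> ` ?C"
    then obtain a b c a' b' c' where z: "z = \<phi> ((a, b, c), (a', b', c'))"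
      and mem: "a \<in> A" "b \<in> A" "c \<in> A" "a' \<in> A" "b' \<in> A" "c' \<in> A"
      and eq: "a - c = a' - c'" "b - c = b' - c'"
      by (auto simp: collisions_def)
    have "c - c' \<in> diffset A A"
      using mem by (auto simp: diffset_def)
    moreover have "a - a' = c - c'" "b - b' = c - c'"
      using eq by linarith+
    ultimately show "z \<in> Sigma (diffset A A) (\<lambda>t. R t \<times> R t \<times> R t)"
      using mem by (simp add: z \<phi>_def R_def)
  qed
  ultimately have "card ?C \<le> card (Sigma (diffset A A) (\<lambda>t. R t \<times> R t \<times> R t))"
    using \<open>finite (diffset A A)\<close> \<open>\<And>t. finite (R t)\<close> by (intro card_inj_on_le) auto
  also have "\<dots> = E3 A"
    using \<open>finite (diffset A A)\<close> \<open>\<And>t. finite (R t)\<close>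
    by (simp add: E3_def delta_def R_def card_cartesian_product power3_eq_cube mult.assoc)
  finally show ?thesis .
qed

lemma finite_popular: "finite A \<Longrightarrow> finite (popular A)"
  using finite_diffset finite_subset by (fastforce simp: popular_def)

definition popular_triangles :: "real set \<Rightarrow> (real \<times> real \<times> real) set" where
  "popular_triangles A = {(a, b, c). a \<in> A \<and> b \<in> A \<and> c \<in> A \<and>
     a - b \<in> popular A \<and> a - c \<in> popular A \<and> b - c \<in> popular A}"

lemma finite_popular_triangles: "finite A \<Longrightarrow> finite (popular_triangles A)"
  unfolding popular_triangles_def by (rule finite_subset[of _ "A \<times> A \<times> A"]) auto

lemma card_popular_triangles_ge:
  assumes "finite A"
  shows "8 * card A ^ 3 \<le> 11 * card (popular_triangles A)"
proof -
  define Bad where "Bad = {(a, b). a \<in> A \<and> b \<in> A \<and> a - b \<notin> popular A}"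
  have "card A ^ 3 \<le> card (popular_triangles A) + 3 * (card Bad * card A)"
    using card_pairwise_related_triples_ge[OF assms, of "\<lambda>a b. a - b \<in> popular A"]
    by (simp add: popular_triangles_def Bad_def)
  moreover have "11 * card Bad * card A \<le> card A ^ 3"
    using mult_le_mono1[OF card_unpopular_pairs_le[OF assms]]
    by (simp add: Bad_def power3_eq_cube power2_eq_square)
  ultimately show ?thesis
    by linarith
qed

lemma card_popular_triangles_sq_le:
  assumes "finite A"
  shows "card (popular_triangles A) ^ 2
    \<le> (\<Sum>x\<in>popular A. delta (popular A) (popular A) x) * E3 A"
proof -
  define P where "P = popular A"
  define S where "S = {(p, q). p \<in> P \<and> q \<in> P \<and> p - q \<in> P}"
  define g where "g = (\<lambda>(a::real, b::real, c::real). (a - c, b - c))"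
  have "finite P"
    using assms by (simp add: P_def finite_popular)
  then have "finite S"
    by (auto simp: S_def intro: finite_subset[of _ "P \<times> P"])
  have "card (popular_triangles A) ^ 2 \<le> card S * card (collisions g (popular_triangles A))"
    by (rule card_sq_le_card_mult_card_collisions)
       (use finite_popular_triangles[OF assms] \<open>finite S\<close>
         in \<open>auto simp: popular_triangles_def S_def P_def g_def\<close>)
  also have "\<dots> \<le> card S * card (collisions g (A \<times> A \<times> A))"
    using assms
    by (intro mult_left_mono card_mono collisions_mono finite_collisions)
       (auto simp: popular_triangles_def)
  also have "\<dots> \<le> card S * E3 A"
    using card_collisions_differences_le_E3[OF assms] by (simp add: g_def)
  also have "card S = (\<Sum>x\<in>P. delta P P x)"
    using sum_delta_eq_card[OF \<open>finite P\<close> \<open>finite P\<close> \<open>finite P\<close>] by (simp add: S_def)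
  finally show ?thesis
    by (simp add: P_def)
qed

theorem lemma1p6:
  shows "\<exists>C::real. C > 0 \<and> (\<exists>N::nat. \<forall>A::real set. finite A \<and> card A \<ge> N \<longrightarrow>
     (real (card A))^6 \<le> C * real (E3 A) * real (\<Sum>x\<in>popular A. delta (popular A) (popular A) x))"
proof (intro exI[of _ "121 / 64"] conjI exI[of _ 0] allI impI)
  show "(0::real) < 121 / 64" by simp
  fix A :: "real set"
  assume "finite A \<and> 0 \<le> card A"
  then have "finite A" by simp
  define \<Sigma> where "\<Sigma> = (\<Sum>x\<in>popular A. delta (popular A) (popular A) x)"
  have "64 * card A ^ 6 = (8 * card A ^ 3) ^ 2"
    by (simp add: power_mult_distrib flip: power_mult)
  also have "\<dots> \<le> (11 * card (popular_triangles A)) ^ 2"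
    using card_popular_triangles_ge[OF \<open>finite A\<close>] by (rule power_mono) simp
  also have "\<dots> \<le> 121 * (\<Sigma> * E3 A)"
    using card_popular_triangles_sq_le[OF \<open>finite A\<close>] by (simp add: power_mult_distrib \<Sigma>_def)
  finally have "real (64 * card A ^ 6) \<le> real (121 * (\<Sigma> * E3 A))"
    by (simp only: of_nat_le_iff)
  then show "(real (card A))^6 \<le> 121 / 64 * real (E3 A) * real \<Sigma>"
    by (simp add: mult_ac)
qed

end
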